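(* Let $(X,d)$ be a complete separable metric space and let $f\colon X\to X$ be a continuous map. If $\operatorname{diam}(X)=\sup_{x,y\in X}d(x,y)=\infty$ and $f$ is weakly mixing, then $f$ is densely uniformly Li-Yorke chaotic.
   Context: $f$ is weakly mixing if $f\times f\colon X\times X\to X\times X$ is transitive, i.e. for all nonempty open $U,V\subset X\times X$ there is $n\in\mathbb{N}$ with $U\cap (f\times f)^{-n}(V)\neq\emptyset$. A subset $S\subset X$ with at least two points is uniformly Li-Yorke scrambled for $f$ if there exist sequences $\{p_n\}$, $\{q_n\}$ in $\mathbb{N}$ such that for all distinct $x,y\in S$: $\lim_{n} d(f^{p_n}(x),f^{p_n}(y))=0$ and $\lim_{n} d(f^{q_n}(x),f^{q_n}(y))=\infty$. $f$ is densely uniformly Li-Yorke chaotic if there exists a dense, uncountable, uniformly Li-Yorke scrambled subset of $X$. *)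

theory Defs
  imports "HOL-Analysis.Analysis"
begin

definition topologically_transitive :: "('a::topological_space \<Rightarrow> 'a) \<Rightarrow> bool" where
  "topologically_transitive g \<longleftrightarrow>
     (\<forall>U V. open U \<and> open V \<and> U \<noteq> {} \<and> V \<noteq> {} \<longrightarrow>
        (\<exists>n::nat. n \<ge> 1 \<and> U \<inter> (g ^^ n) -` V \<noteq> {}))"

definition weakly_mixing :: "('a::topological_space \<Rightarrow> 'a) \<Rightarrow> bool" where
  "weakly_mixing f \<longleftrightarrow> topologically_transitive (\<lambda>(x, y). (f x, f y))"

definition uniformly_li_yorke_scrambled :: "('a::metric_space \<Rightarrow> 'a) \<Rightarrow> 'a set \<Rightarrow> bool" where
  "uniformly_li_yorke_scrambled f S \<longleftrightarrow>
     (\<exists>x\<in>S. \<exists>y\<in>S. x \<noteq> y) \<and>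
     (\<exists>p q :: nat \<Rightarrow> nat. \<forall>x\<in>S. \<forall>y\<in>S. x \<noteq> y \<longrightarrow>
        ((\<lambda>n. dist ((f ^^ p n) x) ((f ^^ p n) y)) \<longlonglongrightarrow> 0) \<and>
        filterlim (\<lambda>n. dist ((f ^^ q n) x) ((f ^^ q n) y)) at_top sequentially)"

definition densely_uniformly_li_yorke_chaotic :: "('a::metric_space \<Rightarrow> 'a) \<Rightarrow> bool" where
  "densely_uniformly_li_yorke_chaotic f \<longleftrightarrow>
     (\<exists>S. closure S = UNIV \<and> uncountable S \<and> uniformly_li_yorke_scrambled f S)"

end

theory Submission
  imports Defs
begin

(* Fix a countable base B_0, B_1, ... of nonempty open sets and a point z. A Cantor scheme of
   open sets is built in stages: at stage k + 1 every piece present at stage k splits into two,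
   and 2^(k+1) new pieces start inside B_k. By Furstenberg's intersection lemma, weak mixing lets
   finitely many pairs of open sets share a hitting time; this yields p_k sending a subset of every
   piece into the ball of radius 1/(k+1) around z, and, X being unbounded, q_k sending subsets of
   distinct pieces near points that are k + 2 apart. Shrinking the pieces to radius 1/(k+1),
   completeness gives one point for each root j and each address in {0,1}^N. These points form a
   dense (one lies in every B_j), uncountable set, scrambled along (p_k) and (q_k). *)

section \<open>Hitting times of weakly mixing maps\<close>

lemma funpow_pair_map:
  fixes f :: "'a \<Rightarrow> 'a"
  shows "((\<lambda>(x, y). (f x, f y)) ^^ n) (x, y) = ((f ^^ n) x, (f ^^ n) y)"
  by (induction n) simp_all

lemma continuous_on_funpow:
  fixes f :: "'a::topological_space \<Rightarrow> 'a"
  assumes "continuous_on UNIV f"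
  shows "continuous_on UNIV (f ^^ n)"
proof (induction n)
  case (Suc n)
  then have "continuous_on UNIV (f \<circ> (f ^^ n))"
    using assms by (intro continuous_on_compose) (auto intro: continuous_on_subset)
  then show ?case by simp
qed (simp add: continuous_on_id)

lemma open_vimage_funpow:
  fixes f :: "'a::topological_space \<Rightarrow> 'a"
  assumes "continuous_on UNIV f" "open V"
  shows "open ((f ^^ n) -` V)"
  using open_vimage[OF assms(2) continuous_on_funpow[OF assms(1)]] by simp

definition hitting_times :: "('a \<Rightarrow> 'a) \<Rightarrow> 'a set \<Rightarrow> 'a set \<Rightarrow> nat set" where
  "hitting_times f U V = {n. U \<inter> (f ^^ n) -` V \<noteq> {}}"

lemma weakly_mixing_shared_hitting_time:
  assumes "weakly_mixing f" "open U" "open U'" "open V" "open V'"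
    and "U \<noteq> {}" "U' \<noteq> {}" "V \<noteq> {}" "V' \<noteq> {}"
  obtains n where "n \<in> hitting_times f U V" "n \<in> hitting_times f U' V'"
proof -
  have "open (U \<times> U')" "open (V \<times> V')" "U \<times> U' \<noteq> {}" "V \<times> V' \<noteq> {}"
    using assms(2-9) by (auto intro: open_Times)
  then obtain n where "(U \<times> U') \<inter> ((\<lambda>(x, y). (f x, f y)) ^^ n) -` (V \<times> V') \<noteq> {}"
    using assms(1)[unfolded weakly_mixing_def topologically_transitive_def, rule_format,
        of "U \<times> U'" "V \<times> V'"]
    by blast
  then obtain x x' where "x \<in> U" "x' \<in> U'" "(f ^^ n) x \<in> V" "(f ^^ n) x' \<in> V'"
    by (auto simp: funpow_pair_map)
  then show thesis
    by (intro that[of n]) (auto simp: hitting_times_def)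
qed

lemma weakly_mixing_hitting_times_Int:
  assumes "continuous_on UNIV f" "weakly_mixing f"
    and "open U\<^sub>1" "open V\<^sub>1" "open U\<^sub>2" "open V\<^sub>2"
    and "U\<^sub>1 \<noteq> {}" "V\<^sub>1 \<noteq> {}" "U\<^sub>2 \<noteq> {}" "V\<^sub>2 \<noteq> {}"
  obtains U V where "open U" "open V" "U \<noteq> {}" "V \<noteq> {}"
    "hitting_times f U V \<subseteq> hitting_times f U\<^sub>1 V\<^sub>1 \<inter> hitting_times f U\<^sub>2 V\<^sub>2"
proof -
  obtain n where "n \<in> hitting_times f U\<^sub>1 U\<^sub>2" "n \<in> hitting_times f V\<^sub>1 V\<^sub>2"
    using weakly_mixing_shared_hitting_time assms(2-10) .
  then have "U\<^sub>1 \<inter> (f ^^ n) -` U\<^sub>2 \<noteq> {}" "V\<^sub>1 \<inter> (f ^^ n) -` V\<^sub>2 \<noteq> {}"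
    by (simp_all add: hitting_times_def)
  moreover have "open (U\<^sub>1 \<inter> (f ^^ n) -` U\<^sub>2)" "open (V\<^sub>1 \<inter> (f ^^ n) -` V\<^sub>2)"
    using assms(1,3-6) open_vimage_funpow by blast+
  moreover have "hitting_times f (U\<^sub>1 \<inter> (f ^^ n) -` U\<^sub>2) (V\<^sub>1 \<inter> (f ^^ n) -` V\<^sub>2)
      \<subseteq> hitting_times f U\<^sub>1 V\<^sub>1 \<inter> hitting_times f U\<^sub>2 V\<^sub>2"
  proof
    fix m assume "m \<in> hitting_times f (U\<^sub>1 \<inter> (f ^^ n) -` U\<^sub>2) (V\<^sub>1 \<inter> (f ^^ n) -` V\<^sub>2)"
    then obtain x where "x \<in> U\<^sub>1" "(f ^^ n) x \<in> U\<^sub>2"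
      "(f ^^ m) x \<in> V\<^sub>1" "(f ^^ n) ((f ^^ m) x) \<in> V\<^sub>2"
      by (auto simp: hitting_times_def)
    moreover have "(f ^^ n) ((f ^^ m) x) = (f ^^ m) ((f ^^ n) x)"
      by (metis add.commute comp_apply funpow_add)
    ultimately show "m \<in> hitting_times f U\<^sub>1 V\<^sub>1 \<inter> hitting_times f U\<^sub>2 V\<^sub>2"
      by (auto simp: hitting_times_def)
  qed
  ultimately show thesis
    by (intro that[of "U\<^sub>1 \<inter> (f ^^ n) -` U\<^sub>2" "V\<^sub>1 \<inter> (f ^^ n) -` V\<^sub>2"]) auto
qed

lemma weakly_mixing_common_hitting_time:
  assumes cont: "continuous_on UNIV f" and wm: "weakly_mixing f" and "finite A"
    and "\<And>a. a \<in> A \<Longrightarrow> open (U a)" "\<And>a. a \<in> A \<Longrightarrow> open (V a)"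
    and "\<And>a. a \<in> A \<Longrightarrow> U a \<noteq> {}" "\<And>a. a \<in> A \<Longrightarrow> V a \<noteq> {}"
  obtains n where "\<And>a. a \<in> A \<Longrightarrow> U a \<inter> (f ^^ n) -` V a \<noteq> {}"
proof -
  have "\<forall>a\<in>A. open (U a) \<and> open (V a) \<and> U a \<noteq> {} \<and> V a \<noteq> {}"
    using assms(4-7) by blast
  with \<open>finite A\<close> have "\<exists>U' V'. open U' \<and> open V' \<and> U' \<noteq> {} \<and> V' \<noteq> {} \<and>
      (\<forall>a\<in>A. hitting_times f U' V' \<subseteq> hitting_times f (U a) (V a))"
  proof (induction A rule: finite_induct)
    case empty
    show ?case by (intro exI[of _ UNIV]) auto
  next
    case (insert b A)
    have "\<forall>a\<in>A. open (U a) \<and> open (V a) \<and> U a \<noteq> {} \<and> V a \<noteq> {}"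
      using insert.prems by simp
    then obtain U' V' where U'V': "open U'" "open V'" "U' \<noteq> {}" "V' \<noteq> {}"
      and sub: "\<forall>a\<in>A. hitting_times f U' V' \<subseteq> hitting_times f (U a) (V a)"
      using insert.IH by blast
    have "open (U b)" "open (V b)" "U b \<noteq> {}" "V b \<noteq> {}"
      using insert.prems by auto
    then obtain U'' V'' where "open U''" "open V''" "U'' \<noteq> {}" "V'' \<noteq> {}"
      and sub': "hitting_times f U'' V'' \<subseteq> hitting_times f U' V' \<inter> hitting_times f (U b) (V b)"
      by (rule weakly_mixing_hitting_times_Int[OF cont wm U'V'(1,2) _ _ U'V'(3,4)])
    with sub show ?case
      by (intro exI[of _ U''] exI[of _ V'']) auto
  qed
  then obtain U' V' where "open U'" "open V'" "U' \<noteq> {}" "V' \<noteq> {}"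
    and sub: "\<forall>a\<in>A. hitting_times f U' V' \<subseteq> hitting_times f (U a) (V a)"
    by blast
  obtain n where "n \<in> hitting_times f U' V'"
    using weakly_mixing_shared_hitting_time[OF wm \<open>open U'\<close> \<open>open U'\<close> \<open>open V'\<close> \<open>open V'\<close>
        \<open>U' \<noteq> {}\<close> \<open>U' \<noteq> {}\<close> \<open>V' \<noteq> {}\<close> \<open>V' \<noteq> {}\<close>] .
  with sub show thesis
    by (intro that[of n]) (auto simp: hitting_times_def)
qed

section \<open>One stage of the construction\<close>

lemma unbounded_separated_points:
  fixes R :: real
  assumes "\<not> bounded (UNIV :: 'a set)" "finite A"
  obtains c :: "'b \<Rightarrow> 'a::metric_space"
  where "\<And>a b. a \<in> A \<Longrightarrow> b \<in> A \<Longrightarrow> a \<noteq> b \<Longrightarrow> R \<le> dist (c a) (c b)"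
proof -
  have "\<exists>c :: 'b \<Rightarrow> 'a. \<forall>a\<in>A. \<forall>b\<in>A. a \<noteq> b \<longrightarrow> R \<le> dist (c a) (c b)"
    using assms(2)
  proof (induction A rule: finite_induct)
    case (insert a A)
    then obtain c :: "'b \<Rightarrow> 'a"
      where c: "\<forall>a\<in>A. \<forall>b\<in>A. a \<noteq> b \<longrightarrow> R \<le> dist (c a) (c b)"
      by blast
    fix x :: 'a
    define M where "M = Max (insert 0 ((\<lambda>b. dist x (c b)) ` A))"
    have M: "dist x (c b) \<le> M" if "b \<in> A" for b
      unfolding M_def using insert.hyps(1) that by auto
    obtain y where y: "M + R < dist x y"
      using assms(1) bounded_any_center[of UNIV x] by (auto simp: not_le)
    have "R \<le> dist y (c b)" if "b \<in> A" for b
      using M[OF that] y dist_triangle[of x y "c b"] by (simp add: dist_commute)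
    with c insert.hyps(2) show ?case
      by (intro exI[of _ "c(a := y)"]) (auto simp: dist_commute)
  qed simp
  then show thesis using that by blast
qed

lemma open_contains_small_closure:
  fixes W :: "'a::metric_space set"
  assumes "open W" "W \<noteq> {}" "r > 0"
  obtains V c where "open V" "V \<noteq> {}" "closure V \<subseteq> W" "closure V \<subseteq> cball c r"
proof -
  obtain x e where "e > 0" "cball x e \<subseteq> W"
    using assms(1,2) open_contains_cball by blast
  moreover have "closure (ball x (min e r)) \<subseteq> cball x (min e r)"
    by (intro closure_minimal ball_subset_cball closed_cball)
  moreover have "cball x (min e r) \<subseteq> cball x e" "cball x (min e r) \<subseteq> cball x r"
    by auto
  ultimately show thesis
    using \<open>r > 0\<close> by (intro that[of "ball x (min e r)" x]) auto
qed

lemma weakly_mixing_contracting_expanding_subsets: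
  fixes f :: "'a::metric_space \<Rightarrow> 'a" and W :: "'b \<Rightarrow> 'a set" and R :: real
  assumes cont: "continuous_on UNIV f" and wm: "weakly_mixing f"
    and unb: "\<not> bounded (UNIV :: 'a set)" and fin: "finite A"
    and W: "\<And>a. a \<in> A \<Longrightarrow> open (W a)" "\<And>a. a \<in> A \<Longrightarrow> W a \<noteq> {}" and "r > 0"
  obtains W' p q where
    "\<And>a. a \<in> A \<Longrightarrow> open (W' a)" "\<And>a. a \<in> A \<Longrightarrow> W' a \<noteq> {}"
    "\<And>a. a \<in> A \<Longrightarrow> W' a \<subseteq> W a"
    "\<And>a x. a \<in> A \<Longrightarrow> x \<in> W' a \<Longrightarrow> dist ((f ^^ p) x) z < r"
    "\<And>a b x y. a \<in> A \<Longrightarrow> b \<in> A \<Longrightarrow> a \<noteq> b \<Longrightarrow> x \<in> W' a \<Longrightarrow> y \<in> W' b \<Longrightarrow>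
       R \<le> dist ((f ^^ q) x) ((f ^^ q) y)"
proof -
  have "ball z r \<noteq> {}" "\<And>y. ball y 1 \<noteq> {}"
    using \<open>r > 0\<close> by auto
  obtain p where p: "\<And>a. a \<in> A \<Longrightarrow> W a \<inter> (f ^^ p) -` ball z r \<noteq> {}"
    by (rule weakly_mixing_common_hitting_time[OF cont wm fin, of W "\<lambda>_. ball z r"])
      (use W \<open>ball z r \<noteq> {}\<close> in auto)
  define W\<^sub>1 where "W\<^sub>1 a = W a \<inter> (f ^^ p) -` ball z r" for a
  have W\<^sub>1_open: "open (W\<^sub>1 a)" if "a \<in> A" for a
    using W(1)[OF that] open_vimage_funpow[OF cont] by (simp add: W\<^sub>1_def open_Int)
  have W\<^sub>1_nonempty: "W\<^sub>1 a \<noteq> {}" if "a \<in> A" for a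
    using p[OF that] by (simp add: W\<^sub>1_def)
  obtain c :: "'b \<Rightarrow> 'a"
    where c: "\<And>a b. a \<in> A \<Longrightarrow> b \<in> A \<Longrightarrow> a \<noteq> b \<Longrightarrow> R + 2 \<le> dist (c a) (c b)"
    using unbounded_separated_points[OF unb fin] by blast
  obtain q where q: "\<And>a. a \<in> A \<Longrightarrow> W\<^sub>1 a \<inter> (f ^^ q) -` ball (c a) 1 \<noteq> {}"
    by (rule weakly_mixing_common_hitting_time[OF cont wm fin, of W\<^sub>1 "\<lambda>a. ball (c a) 1"])
      (use W\<^sub>1_open W\<^sub>1_nonempty \<open>\<And>y. ball y 1 \<noteq> {}\<close> in auto)
  define W\<^sub>2 where "W\<^sub>2 a = W\<^sub>1 a \<inter> (f ^^ q) -` ball (c a) 1" for a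
  have "R \<le> dist ((f ^^ q) x) ((f ^^ q) y)"
    if "a \<in> A" "b \<in> A" "a \<noteq> b" "x \<in> W\<^sub>2 a" "y \<in> W\<^sub>2 b" for a b x y
  proof -
    have "dist (c a) ((f ^^ q) x) < 1" "dist (c b) ((f ^^ q) y) < 1"
      using that(4,5) by (simp_all add: W\<^sub>2_def)
    moreover have "dist (c a) (c b) \<le>
        dist (c a) ((f ^^ q) x) + dist ((f ^^ q) x) ((f ^^ q) y) + dist (c b) ((f ^^ q) y)"
      using dist_triangle[of "c a" "c b" "(f ^^ q) x"]
        dist_triangle[of "(f ^^ q) x" "c b" "(f ^^ q) y"]
      by (simp add: dist_commute)
    ultimately show ?thesis
      using c[OF that(1-3)] by linarith
  qed
  moreover have "open (W\<^sub>2 a)" if "a \<in> A" for a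
    using W\<^sub>1_open[OF that] open_vimage_funpow[OF cont] by (simp add: W\<^sub>2_def open_Int)
  moreover have "W\<^sub>2 a \<noteq> {}" if "a \<in> A" for a
    using q[OF that] by (simp add: W\<^sub>2_def)
  moreover have "W\<^sub>2 a \<subseteq> W a" "dist ((f ^^ p) x) z < r" if "x \<in> W\<^sub>2 a" for a x
    using that by (auto simp: W\<^sub>2_def W\<^sub>1_def dist_commute)
  ultimately show thesis
    by (intro that[of W\<^sub>2 p q]) blast+
qed

lemma weakly_mixing_separating_refinement:
  fixes f :: "'a::metric_space \<Rightarrow> 'a" and W :: "'b \<Rightarrow> 'a set" and R :: real
  assumes cont: "continuous_on UNIV f" and wm: "weakly_mixing f"
    and unb: "\<not> bounded (UNIV :: 'a set)" and fin: "finite A"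
    and W: "\<And>a. a \<in> A \<Longrightarrow> open (W a)" "\<And>a. a \<in> A \<Longrightarrow> W a \<noteq> {}" and "r > 0"
  obtains V p q where
    "\<And>a. a \<in> A \<Longrightarrow> open (V a)" "\<And>a. a \<in> A \<Longrightarrow> V a \<noteq> {}"
    "\<And>a. a \<in> A \<Longrightarrow> closure (V a) \<subseteq> W a"
    "\<And>a. a \<in> A \<Longrightarrow> \<exists>c. closure (V a) \<subseteq> cball c r"
    "\<And>a x. a \<in> A \<Longrightarrow> x \<in> closure (V a) \<Longrightarrow> dist ((f ^^ p) x) z < r"
    "\<And>a b x y. a \<in> A \<Longrightarrow> b \<in> A \<Longrightarrow> a \<noteq> b \<Longrightarrow>
       x \<in> closure (V a) \<Longrightarrow> y \<in> closure (V b) \<Longrightarrow> R \<le> dist ((f ^^ q) x) ((f ^^ q) y)"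
proof -
  obtain W' p q where W': "\<And>a. a \<in> A \<Longrightarrow> open (W' a)" "\<And>a. a \<in> A \<Longrightarrow> W' a \<noteq> {}"
    "\<And>a. a \<in> A \<Longrightarrow> W' a \<subseteq> W a"
    and contracted: "\<And>a x. a \<in> A \<Longrightarrow> x \<in> W' a \<Longrightarrow> dist ((f ^^ p) x) z < r"
    and separated: "\<And>a b x y. a \<in> A \<Longrightarrow> b \<in> A \<Longrightarrow> a \<noteq> b \<Longrightarrow> x \<in> W' a \<Longrightarrow> y \<in> W' b \<Longrightarrow>
       R \<le> dist ((f ^^ q) x) ((f ^^ q) y)"
    by (rule weakly_mixing_contracting_expanding_subsets[where W = W and z = z and R = R,
          OF cont wm unb fin])
      (use W \<open>r > 0\<close> in auto)
  have "\<exists>V. open V \<and> V \<noteq> {} \<and> closure V \<subseteq> W' a \<and> (\<exists>c. closure V \<subseteq> cball c r)"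
    if a: "a \<in> A" for a
  proof -
    obtain V c where "open V" "V \<noteq> {}" "closure V \<subseteq> W' a" "closure V \<subseteq> cball c r"
      using open_contains_small_closure[OF W'(1)[OF a] W'(2)[OF a] \<open>r > 0\<close>] .
    then show ?thesis
      by blast
  qed
  then obtain V where V: "\<And>a. a \<in> A \<Longrightarrow> open (V a) \<and> V a \<noteq> {} \<and> closure (V a) \<subseteq> W' a \<and>
      (\<exists>c. closure (V a) \<subseteq> cball c r)"
    by metis
  show thesis
  proof (rule that[of V p q])
    show "closure (V a) \<subseteq> W a" if "a \<in> A" for a
      using V[OF that] W'(3)[OF that] by blast
    show "dist ((f ^^ p) x) z < r" if "a \<in> A" "x \<in> closure (V a)" for a x
      using V that contracted by blast
    show "R \<le> dist ((f ^^ q) x) ((f ^^ q) y)"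
      if "a \<in> A" "b \<in> A" "a \<noteq> b" "x \<in> closure (V a)" "y \<in> closure (V b)" for a b x y
      using V that separated by blast
  qed (use V in blast)+
qed

section \<open>The Cantor scheme\<close>

lemma countable_nonempty_open_base:
  obtains B :: "nat \<Rightarrow> 'a::second_countable_topology set"
  where "\<And>j. open (B j)" "\<And>j. B j \<noteq> {}" "\<And>U. open U \<Longrightarrow> U \<noteq> {} \<Longrightarrow> \<exists>j. B j \<subseteq> U"
proof -
  obtain \<B> :: "'a set set" where "countable \<B>" "topological_basis \<B>"
    using ex_countable_basis by blast
  define \<B>' where "\<B>' = \<B> - {{}}"
  have inside: "\<exists>b\<in>\<B>'. b \<subseteq> U" if "open U" "U \<noteq> {}" for U
  proof -
    obtain x where "x \<in> U"
      using \<open>U \<noteq> {}\<close> by blast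
    then obtain b where "b \<in> \<B>" "x \<in> b" "b \<subseteq> U"
      using topological_basisE[OF \<open>topological_basis \<B>\<close> \<open>open U\<close>] by metis
    then show ?thesis
      unfolding \<B>'_def by blast
  qed
  then have "\<B>' \<noteq> {}"
    by blast
  have "countable \<B>'"
    using \<open>countable \<B>\<close> by (simp add: \<B>'_def)
  show thesis
  proof (rule that[of "from_nat_into \<B>'"])
    show "open (from_nat_into \<B>' j)" "from_nat_into \<B>' j \<noteq> {}" for j
      using from_nat_into[OF \<open>\<B>' \<noteq> {}\<close>, of j]
        topological_basis_open[OF \<open>topological_basis \<B>\<close>]
      unfolding \<B>'_def by auto
    show "\<exists>j. from_nat_into \<B>' j \<subseteq> U" if "open U" "U \<noteq> {}" for U
      using inside[OF that] from_nat_into_surj[OF \<open>countable \<B>'\<close>] by metis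
  qed
qed

lemma uncountable_UNIV_nat_bool_fun: "uncountable (UNIV :: (nat \<Rightarrow> bool) set)"
proof
  assume "countable (UNIV :: (nat \<Rightarrow> bool) set)"
  then obtain g :: "nat \<Rightarrow> nat \<Rightarrow> bool" where "surj g"
    by (metis uncountable_def UNIV_not_empty)
  then obtain n where "g n = (\<lambda>m. \<not> g m m)"
    by (metis surjD)
  then have "g n n \<longleftrightarrow> \<not> g n n"
    by metis
  then show False
    by simp
qed

(* A piece of stage k is indexed by (j, w) with j < k and w a binary word of length k: it is the
   piece with address w of the Cantor set grown inside B_j. At stage k + 1 the piece (j, w) refines
   its parent (j, butlast w) if j < k, and the new roots (k, w) refine B_k. *)
definition scheme_nodes :: "nat \<Rightarrow> (nat \<times> bool list) set" where
  "scheme_nodes k = {(j, w). j < k \<and> length w = k}"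

lemma finite_scheme_nodes: "finite (scheme_nodes k)"
proof (rule finite_subset)
  show "scheme_nodes k \<subseteq> {..<k} \<times> {w. set w \<subseteq> UNIV \<and> length w = k}"
    by (auto simp: scheme_nodes_def)
  show "finite ({..<k} \<times> {w :: bool list. set w \<subseteq> UNIV \<and> length w = k})"
    by (intro finite_cartesian_product finite_lists_length_eq) auto
qed

fun scheme_target ::
    "(nat \<Rightarrow> 'a set) \<Rightarrow> nat \<Rightarrow> (nat \<times> bool list \<Rightarrow> 'a set) \<Rightarrow> nat \<times> bool list \<Rightarrow> 'a set"
  where "scheme_target B k V (j, w) = (if j < k then V (j, butlast w) else B k)"

lemma scheme_target_preserves:
  assumes "\<And>j. P (B j)" "\<And>a. a \<in> scheme_nodes k \<Longrightarrow> P (V a)" "a \<in> scheme_nodes (Suc k)"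
  shows "P (scheme_target B k V a)"
  using assms by (cases a) (auto simp: scheme_nodes_def)

definition li_yorke_step ::
    "('a::metric_space \<Rightarrow> 'a) \<Rightarrow> (nat \<Rightarrow> 'a set) \<Rightarrow> 'a \<Rightarrow> nat \<Rightarrow>
      (nat \<times> bool list \<Rightarrow> 'a set) \<Rightarrow> (nat \<times> bool list \<Rightarrow> 'a set) \<Rightarrow> nat \<Rightarrow> nat \<Rightarrow> bool" where
  "li_yorke_step f B z k V V' p q \<longleftrightarrow>
    (\<forall>a\<in>scheme_nodes (Suc k). V' a \<noteq> {} \<and> closure (V' a) \<subseteq> scheme_target B k V a \<and>
       (\<exists>c. closure (V' a) \<subseteq> cball c (1 / real (Suc k))) \<and>
       (\<forall>x\<in>closure (V' a). dist ((f ^^ p) x) z < 1 / real (Suc k))) \<and>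
    (\<forall>a\<in>scheme_nodes (Suc k). \<forall>b\<in>scheme_nodes (Suc k). a \<noteq> b \<longrightarrow>
       (\<forall>x\<in>closure (V' a). \<forall>y\<in>closure (V' b). real k \<le> dist ((f ^^ q) x) ((f ^^ q) y)))"

lemma li_yorke_step_exists:
  fixes f :: "'a::metric_space \<Rightarrow> 'a"
  assumes cont: "continuous_on UNIV f" and wm: "weakly_mixing f"
    and unb: "\<not> bounded (UNIV :: 'a set)"
    and "\<And>j. open (B j)" "\<And>j. B j \<noteq> {}"
    and "\<And>a. a \<in> scheme_nodes k \<Longrightarrow> open (V a)" "\<And>a. a \<in> scheme_nodes k \<Longrightarrow> V a \<noteq> {}"
  obtains V' p q where "\<And>a. a \<in> scheme_nodes (Suc k) \<Longrightarrow> open (V' a)"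
    "li_yorke_step f B z k V V' p q"
proof -
  have "open (scheme_target B k V a)" "scheme_target B k V a \<noteq> {}"
    if "a \<in> scheme_nodes (Suc k)" for a
    using scheme_target_preserves[where P = "open"]
      scheme_target_preserves[where P = "\<lambda>S. S \<noteq> {}"]
      assms(4-7) that by blast+
  then obtain V' p q where "\<And>a. a \<in> scheme_nodes (Suc k) \<Longrightarrow> open (V' a)"
    "\<And>a. a \<in> scheme_nodes (Suc k) \<Longrightarrow> V' a \<noteq> {}"
    "\<And>a. a \<in> scheme_nodes (Suc k) \<Longrightarrow> closure (V' a) \<subseteq> scheme_target B k V a"
    "\<And>a. a \<in> scheme_nodes (Suc k) \<Longrightarrow> \<exists>c. closure (V' a) \<subseteq> cball c (1 / real (Suc k))"
    "\<And>a x. a \<in> scheme_nodes (Suc k) \<Longrightarrow> x \<in> closure (V' a) \<Longrightarrow>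
       dist ((f ^^ p) x) z < 1 / real (Suc k)"
    "\<And>a b x y. a \<in> scheme_nodes (Suc k) \<Longrightarrow> b \<in> scheme_nodes (Suc k) \<Longrightarrow> a \<noteq> b \<Longrightarrow>
       x \<in> closure (V' a) \<Longrightarrow> y \<in> closure (V' b) \<Longrightarrow> real k \<le> dist ((f ^^ q) x) ((f ^^ q) y)"
    by (rule weakly_mixing_separating_refinement[OF cont wm unb finite_scheme_nodes]) auto
  then show thesis
    by (intro that[of V' p q]) (auto simp: li_yorke_step_def)
qed

locale li_yorke_scheme =
  fixes f :: "'a::complete_space \<Rightarrow> 'a" and B :: "nat \<Rightarrow> 'a set" and z :: 'a
    and V :: "nat \<Rightarrow> nat \<times> bool list \<Rightarrow> 'a set" and p q :: "nat \<Rightarrow> nat"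
  assumes step: "li_yorke_step f B z k (V k) (V (Suc k)) (p k) (q k)"
    and base: "open U \<Longrightarrow> U \<noteq> {} \<Longrightarrow> \<exists>j. B j \<subseteq> U"

lemma li_yorke_scheme_exists:
  fixes f :: "'a::complete_space \<Rightarrow> 'a"
  assumes cont: "continuous_on UNIV f" and wm: "weakly_mixing f"
    and unb: "\<not> bounded (UNIV :: 'a set)"
    and B: "\<And>j. open (B j)" "\<And>j. B j \<noteq> {}" "\<And>U. open U \<Longrightarrow> U \<noteq> {} \<Longrightarrow> \<exists>j. B j \<subseteq> U"
  obtains V p q where "li_yorke_scheme f B z V p q"
proof -
  let ?P = "\<lambda>k V. \<forall>a\<in>scheme_nodes k. open (V a) \<and> V a \<noteq> {}"
  have "\<exists>V. \<forall>k. ?P k (V k) \<and> (\<exists>p q. li_yorke_step f B z k (V k) (V (Suc k)) p q)"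
  proof (rule dependent_nat_choice)
    show "\<exists>V. ?P 0 V"
      by (simp add: scheme_nodes_def)
    show "\<exists>V'. ?P (Suc k) V' \<and> (\<exists>p q. li_yorke_step f B z k V V' p q)" if "?P k V" for V k
    proof -
      have "\<And>a. a \<in> scheme_nodes k \<Longrightarrow> open (V a)" "\<And>a. a \<in> scheme_nodes k \<Longrightarrow> V a \<noteq> {}"
        using that by auto
      then show ?thesis
      proof (rule li_yorke_step_exists[where B = B and z = z, OF cont wm unb B(1,2)])
        fix V' p q
        assume "\<And>a. a \<in> scheme_nodes (Suc k) \<Longrightarrow> open (V' a)"
          and step: "li_yorke_step f B z k V V' p q"
        moreover have "\<forall>a\<in>scheme_nodes (Suc k). V' a \<noteq> {}"
          using step by (simp add: li_yorke_step_def)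
        ultimately show ?thesis
          by blast
      qed
    qed
  qed
  then obtain V where "\<forall>k. \<exists>p q. li_yorke_step f B z k (V k) (V (Suc k)) p q"
    by blast
  then obtain p q where "\<And>k. li_yorke_step f B z k (V k) (V (Suc k)) (p k) (q k)"
    by metis
  with B(3) show thesis
    by (intro that[of V p q]) (simp add: li_yorke_scheme_def)
qed

context li_yorke_scheme
begin

lemma
  assumes "a \<in> scheme_nodes (Suc k)"
  shows scheme_nonempty: "V (Suc k) a \<noteq> {}"
    and scheme_refines: "closure (V (Suc k) a) \<subseteq> scheme_target B k (V k) a"
    and scheme_small: "\<exists>c. closure (V (Suc k) a) \<subseteq> cball c (1 / real (Suc k))"
    and scheme_contracts:
      "x \<in> closure (V (Suc k) a) \<Longrightarrow> dist ((f ^^ p k) x) z < 1 / real (Suc k)"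
  using step[of k] assms unfolding li_yorke_step_def by blast+

lemma scheme_expands:
  assumes "a \<in> scheme_nodes (Suc k)" "b \<in> scheme_nodes (Suc k)" "a \<noteq> b"
    and "x \<in> closure (V (Suc k) a)" "y \<in> closure (V (Suc k) b)"
  shows "real k \<le> dist ((f ^^ q k) x) ((f ^^ q k) y)"
  using step[of k] assms unfolding li_yorke_step_def by blast

lemma branch_node: "j \<le> k \<Longrightarrow> (j, map \<sigma> [0..<Suc k]) \<in> scheme_nodes (Suc k)"
  by (simp add: scheme_nodes_def)

lemma branch_decreasing:
  assumes "j \<le> k"
  shows "closure (V (Suc (Suc k)) (j, map \<sigma> [0..<Suc (Suc k)]))
    \<subseteq> closure (V (Suc k) (j, map \<sigma> [0..<Suc k]))"
proof -
  have "closure (V (Suc (Suc k)) (j, map \<sigma> [0..<Suc (Suc k)]))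
      \<subseteq> V (Suc k) (j, map \<sigma> [0..<Suc k])"
    using scheme_refines[OF branch_node[of j "Suc k" \<sigma>]] assms by (simp add: butlast_append)
  then show ?thesis
    using closure_subset by blast
qed

lemma branch_point_exists: "\<exists>x. \<forall>k\<ge>j. x \<in> closure (V (Suc k) (j, map \<sigma> [0..<Suc k]))"
proof -
  define S where "S n = closure (V (Suc (j + n)) (j, map \<sigma> [0..<Suc (j + n)]))" for n
  obtain x where x: "\<And>n. x \<in> S n"
  proof (rule decreasing_closed_nest[of S])
    show "closed (S n)" for n
      by (simp add: S_def)
    show "S n \<noteq> {}" for n
      using scheme_nonempty[OF branch_node[of j "j + n"]] by (simp add: S_def)
    show "S n \<subseteq> S m" if "m \<le> n" for m n
      using lift_Suc_antimono_le[of S, OF _ that] branch_decreasing[of j] by (simp add: S_def)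
    show "\<exists>n. \<forall>x\<in>S n. \<forall>y\<in>S n. dist x y < e" if "e > 0" for e
    proof -
      obtain n where n: "1 / real (Suc n) < e / 2"
        using nat_approx_posE[of "e / 2"] \<open>e > 0\<close> by auto
      obtain c where c: "S n \<subseteq> cball c (1 / real (Suc (j + n)))"
        using scheme_small[OF branch_node[of j "j + n"]] by (auto simp: S_def)
      have "dist x y < e" if "x \<in> S n" "y \<in> S n" for x y
      proof -
        have "dist c x \<le> 1 / real (Suc (j + n))" "dist c y \<le> 1 / real (Suc (j + n))"
          using c that by auto
        moreover have "dist x y \<le> dist c x + dist c y"
          by (simp add: dist_triangle3 dist_commute)
        ultimately have "dist x y \<le> 1 / real (Suc (j + n)) + 1 / real (Suc (j + n))"
          by linarith
        also have "\<dots> \<le> 1 / real (Suc n) + 1 / real (Suc n)"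
          by (intro add_mono) (simp_all add: frac_le)
        finally show ?thesis
          using n by linarith
      qed
      then show ?thesis
        by blast
    qed
  qed blast
  have "x \<in> closure (V (Suc k) (j, map \<sigma> [0..<Suc k]))" if "j \<le> k" for k
    using x[of "k - j"] that by (simp add: S_def)
  then show ?thesis
    by blast
qed

definition scheme_point :: "nat \<Rightarrow> (nat \<Rightarrow> bool) \<Rightarrow> 'a" where
  "scheme_point j \<sigma> = (SOME x. \<forall>k\<ge>j. x \<in> closure (V (Suc k) (j, map \<sigma> [0..<Suc k])))"

lemma scheme_point_in: "j \<le> k \<Longrightarrow> scheme_point j \<sigma> \<in> closure (V (Suc k) (j, map \<sigma> [0..<Suc k]))"
  using someI_ex[OF branch_point_exists[of j \<sigma>]] unfolding scheme_point_def by blast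

lemma scheme_point_in_base: "scheme_point j \<sigma> \<in> B j"
  using scheme_refines[OF branch_node[of j j \<sigma>]] scheme_point_in[of j j \<sigma>] by auto

lemma scheme_points_approach:
  "\<forall>\<^sub>F k in sequentially.
     dist ((f ^^ p k) (scheme_point j \<sigma>)) ((f ^^ p k) (scheme_point j' \<sigma>')) \<le> 2 / real (Suc k)"
proof (rule eventually_sequentiallyI)
  fix k assume "max j j' \<le> k"
  then have "dist ((f ^^ p k) (scheme_point j \<sigma>)) z < 1 / real (Suc k)"
    "dist ((f ^^ p k) (scheme_point j' \<sigma>')) z < 1 / real (Suc k)"
    using scheme_contracts[OF branch_node scheme_point_in] by auto
  then show "dist ((f ^^ p k) (scheme_point j \<sigma>)) ((f ^^ p k) (scheme_point j' \<sigma>'))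
      \<le> 2 / real (Suc k)"
    using dist_triangle2[of "(f ^^ p k) (scheme_point j \<sigma>)" "(f ^^ p k) (scheme_point j' \<sigma>')" z]
    by simp
qed

lemma scheme_points_separate:
  assumes "(j, \<sigma>) \<noteq> (j', \<sigma>')"
  shows "\<forall>\<^sub>F k in sequentially.
     real k \<le> dist ((f ^^ q k) (scheme_point j \<sigma>)) ((f ^^ q k) (scheme_point j' \<sigma>'))"
proof -
  obtain i where i: "j \<noteq> j' \<or> \<sigma> i \<noteq> \<sigma>' i"
    using assms by fastforce
  show ?thesis
  proof (rule eventually_sequentiallyI)
    fix k assume k: "max (max j j') i \<le> k"
    then have "map \<sigma> [0..<Suc k] ! i = \<sigma> i" "map \<sigma>' [0..<Suc k] ! i = \<sigma>' i"
      by (simp_all del: upt_Suc)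
    then have "(j, map \<sigma> [0..<Suc k]) \<noteq> (j', map \<sigma>' [0..<Suc k])"
      using i by (metis prod.inject)
    with k show "real k \<le> dist ((f ^^ q k) (scheme_point j \<sigma>)) ((f ^^ q k) (scheme_point j' \<sigma>'))"
      by (intro scheme_expands[OF branch_node branch_node _ scheme_point_in scheme_point_in]) auto
  qed
qed

lemma inj_scheme_point: "inj (case_prod scheme_point)"
proof (rule injI)
  fix a b :: "nat \<times> (nat \<Rightarrow> bool)"
  assume eq: "case_prod scheme_point a = case_prod scheme_point b"
  show "a = b"
  proof (rule ccontr)
    assume "a \<noteq> b"
    then obtain N where "\<And>k. N \<le> k \<Longrightarrow> real k \<le> 0"
      using scheme_points_separate[of "fst a" "snd a" "fst b" "snd b"] eq
      by (auto simp: eventually_sequentially case_prod_beta)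
    then show False
      by (metis of_nat_le_0_iff Suc_n_not_le_n nat_le_linear)
  qed
qed

lemma closure_range_scheme_point: "closure (range (case_prod scheme_point)) = UNIV"
proof -
  have "x \<in> closure (range (case_prod scheme_point))" for x
    unfolding closure_approachable
  proof (intro allI impI)
    fix e :: real assume "e > 0"
    then obtain j where "B j \<subseteq> ball x e"
      using base[of "ball x e"] by auto
    then have "scheme_point j (\<lambda>_. False) \<in> ball x e"
      using scheme_point_in_base by blast
    then show "\<exists>y\<in>range (case_prod scheme_point). dist y x < e"
      by (intro bexI[of _ "scheme_point j (\<lambda>_. False)"]) (auto simp: dist_commute)
  qed
  then show ?thesis
    by auto
qed

lemma uncountable_range_scheme_point: "uncountable (range (case_prod scheme_point))"
proof
  assume "countable (range (case_prod scheme_point))"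
  then have "countable (UNIV :: (nat \<times> (nat \<Rightarrow> bool)) set)"
    using countable_image_inj_on[OF _ inj_scheme_point] by simp
  then have "countable (snd ` (UNIV :: (nat \<times> (nat \<Rightarrow> bool)) set))"
    by (rule countable_image)
  then show False
    using uncountable_UNIV_nat_bool_fun by simp
qed

lemma uniformly_li_yorke_scrambled_range_scheme_point:
  "uniformly_li_yorke_scrambled f (range (case_prod scheme_point))"
  unfolding uniformly_li_yorke_scrambled_def
proof (intro conjI exI ballI impI)
  let ?S = "range (case_prod scheme_point)"
  obtain x where "x \<in> ?S"
    by blast
  moreover have "?S - {x} \<noteq> {}"
    using uncountable_minus_countable[OF uncountable_range_scheme_point, of "{x}"]
    by (metis countable_empty countable_insert)
  ultimately show "\<exists>x\<in>?S. \<exists>y\<in>?S. x \<noteq> y"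
    by blast
  fix x y assume "x \<in> ?S" "y \<in> ?S" "x \<noteq> y"
  then obtain j \<sigma> j' \<sigma>' where x: "x = scheme_point j \<sigma>" and y: "y = scheme_point j' \<sigma>'"
    and "(j, \<sigma>) \<noteq> (j', \<sigma>')"
    by auto
  have "(\<lambda>k. 2 / real (Suc k)) \<longlonglongrightarrow> 0"
    using LIMSEQ_Suc[OF lim_const_over_n[of 2]] by simp
  then show "(\<lambda>k. dist ((f ^^ p k) x) ((f ^^ p k) y)) \<longlonglongrightarrow> 0"
    unfolding x y by (rule Lim_null_comparison[rotated]) (use scheme_points_approach in simp)
  show "filterlim (\<lambda>k. dist ((f ^^ q k) x) ((f ^^ q k) y)) at_top sequentially"
    using filterlim_at_top_mono[OF filterlim_real_sequentially scheme_points_separate]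
      \<open>(j, \<sigma>) \<noteq> (j', \<sigma>')\<close> unfolding x y by blast
qed

lemma densely_uniformly_li_yorke_chaotic: "densely_uniformly_li_yorke_chaotic f"
  unfolding densely_uniformly_li_yorke_chaotic_def
  using closure_range_scheme_point uncountable_range_scheme_point
    uniformly_li_yorke_scrambled_range_scheme_point by blast

end

theorem proposition2p7:
  fixes f :: "'a::polish_space \<Rightarrow> 'a"
  assumes "continuous_on UNIV f"
    and "\<not> bounded (UNIV :: 'a set)"
    and "weakly_mixing f"
  shows "densely_uniformly_li_yorke_chaotic f"
proof -
  obtain B :: "nat \<Rightarrow> 'a set"
    where B: "\<And>j. open (B j)" "\<And>j. B j \<noteq> {}" "\<And>U. open U \<Longrightarrow> U \<noteq> {} \<Longrightarrow> \<exists>j. B j \<subseteq> U"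
    using countable_nonempty_open_base by blast
  fix z :: 'a
  obtain V p q where "li_yorke_scheme f B z V p q"
    using li_yorke_scheme_exists[where B = B and z = z, OF assms(1,3,2) B] by blast
  then show ?thesis
    by (rule li_yorke_scheme.densely_uniformly_li_yorke_chaotic)
qed

end
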